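(* Let $m$ be a nonnegative integer and $r>0$. Then $$\sum_{n=0}^{\infty}\frac{1}{(n+m+1)(2n+2m+2r+1)}\frac{\binom{2n}{n}}{\binom{2n+2m+2r}{n+m+r}}=\frac{1}{2(2m+1)\binom{2m}{m}}\cdot\frac{1}{(2r-1)\binom{2r-2}{r-1}}-\frac{1}{4^{m+r}}\sum_{k=0}^m\binom{m}{k}\frac{(-1)^k}{2k+1}\frac{k!}{(r)_{k+1}}.$$
   Context: $(x)_n=x(x+1)\cdots(x+n-1)$ denotes the Pochhammer symbol, $(x)_0=1$. For non-integer arguments, binomial coefficients are understood via the Gamma function: $\binom{a}{b}=\frac{\Gamma(a+1)}{\Gamma(b+1)\Gamma(a-b+1)}$. *)

theory Defs
  imports "HOL-Analysis.Analysis"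
begin

definition gbinom :: "real \<Rightarrow> real \<Rightarrow> real" where
  "gbinom a b = Gamma (a + 1) / (Gamma (b + 1) * Gamma (a - b + 1))"

text \<open>The factor (2r-1) * binom(2r-2, r-1). At r = 1/2 the literal product is the
  indeterminate form 0 * (pole); there it is understood by its (continuous) value
  Gamma(2r)/Gamma(r)^2 = 1/pi.\<close>
definition rfactor :: "real \<Rightarrow> real" where
  "rfactor r = (if r = 1/2 then Gamma (2*r) / (Gamma r)^2
                else (2*r - 1) * gbinom (2*r - 2) (r - 1))"

end

theory Submission
  imports Defs "HOL-Real_Asymp.Real_Asymp"
begin

text \<open>
  Write c(s,n) = C(2n,n) / binom(2n+2s, n+s). Its term ratio is (2n+1)(n+s+1) / ((n+1)(2n+2s+1)),
  so both c(s,n) - c(s,n+1) and c(s,n) n/(n+m) - c(s,n+1) (n+1)/(n+m+1) are c(s,n) times explicit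
  rational functions of n, and the corresponding series telescope. Their sums involve the limit
  c(s,n) \<rightarrow> 4^(-s), which follows from the Gamma-function limit of a quotient of Pochhammer
  symbols and Legendre's duplication formula. With s = m + r, the first telescoping sum is the
  case m = 0 of the theorem; the second shows that the series T(m,r) of the theorem satisfy
  r(2m+1) T(m,r) - m(2r+1) T(m-1,r+1) = -4^(-(m+r)). The right-hand side obeys the same relation:
  its closed part is annihilated by the left-hand operator, and the finite sum satisfies it with
  right-hand side 1, by a Gosper-style telescoping in the summation index. Induction on m
  concludes.
\<close>

lemma Gamma_plus1_real: "x > 0 \<Longrightarrow> Gamma (x + 1) = x * Gamma (x :: real)"
  by (rule Gamma_plus1) auto

lemma Gamma_legendre_duplication_real:
  fixes x :: real
  assumes "x > 0"
  shows "Gamma x * Gamma (x + 1/2) = 2 powr (1 - 2 * x) * sqrt pi * Gamma (2 * x)"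
proof -
  have not_pole: "complex_of_real y \<notin> \<int>\<^sub>\<le>\<^sub>0" if "y > 0" for y
    using that by (auto simp: of_real_in_nonpos_Ints_iff)
  have shift: "complex_of_real x + 1/2 = complex_of_real (x + 1/2)"
    and double: "2 * complex_of_real x = complex_of_real (2 * x)"
    by simp_all
  have "complex_of_real (Gamma x * Gamma (x + 1/2))
        = Gamma (complex_of_real x) * Gamma (complex_of_real x + 1/2)"
    by (simp only: Gamma_complex_of_real of_real_mult shift)
  also have "\<dots> = exp ((1 - 2 * complex_of_real x) * of_real (ln 2)) * of_real (sqrt pi)
                    * Gamma (2 * complex_of_real x)"
    using assms not_pole[of x] not_pole[of "x + 1/2"] by (intro Gamma_legendre_duplication) auto
  also have "exp ((1 - 2 * complex_of_real x) * of_real (ln 2)) = complex_of_real (2 powr (1 - 2 * x))"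
    by (simp add: powr_def flip: exp_of_real)
  also have "Gamma (2 * complex_of_real x) = complex_of_real (Gamma (2 * x))"
    by (simp only: double Gamma_complex_of_real)
  finally show ?thesis
    by (simp only: of_real_mult [symmetric] of_real_eq_iff)
qed

lemma pochhammer_ratio_tendsto:
  fixes a b c d :: real
  assumes pos: "a > 0" "b > 0" "c > 0" "d > 0" and "a + b = c + d"
  shows "(\<lambda>n. pochhammer a n * pochhammer b n / (pochhammer c n * pochhammer d n))
           \<longlonglongrightarrow> Gamma c * Gamma d / (Gamma a * Gamma b)"
proof -
  have "(\<lambda>n. Gamma_series' c n * Gamma_series' d n / (Gamma_series' a n * Gamma_series' b n))
          \<longlonglongrightarrow> Gamma c * Gamma d / (Gamma a * Gamma b)"
    by (intro tendsto_intros Gamma_series'_LIMSEQ) (use pos in \<open>auto simp: Gamma_eq_zero_iff\<close>)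
  \<comment> \<open>this holds for all \<open>n\<close>: at \<open>n = 0\<close> both quotients are 1\<close>
  moreover have "Gamma_series' c n * Gamma_series' d n / (Gamma_series' a n * Gamma_series' b n)
      = pochhammer a n * pochhammer b n / (pochhammer c n * pochhammer d n)" for n
  proof -
    define L where "L = ln (real n)"
    have "exp (c * L) * exp (d * L) = exp (a * L) * exp (b * L)"
      by (simp only: \<open>a + b = c + d\<close> flip: exp_add distrib_right)
    then show ?thesis
      using pos pochhammer_pos[of a n] pochhammer_pos[of b n] pochhammer_pos[of c n]
        pochhammer_pos[of d n]
      unfolding Gamma_series'_def L_def[symmetric] by (simp add: divide_simps)
  qed
  ultimately show ?thesis
    by (simp only:)
qed

lemma central_binomial_Suc:
  "real (2 * Suc n choose Suc n) = real (2 * n choose n) * (2 * (2 * real n + 1) / (real n + 1))"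
proof -
  have "Suc n * (Suc (Suc (2 * n)) choose Suc n) = Suc (Suc (2 * n)) * (Suc (2 * n) choose n)"
    by (rule Suc_times_binomial)
  moreover have "Suc (2 * n) * (2 * n choose n) = (Suc (2 * n) choose Suc n) * Suc n"
    by (rule Suc_times_binomial_eq)
  moreover have "Suc (2 * n) choose n = Suc (2 * n) choose Suc n"
    using binomial_symmetric[of n "Suc (2 * n)"] by (simp add: Suc_diff_le)
  ultimately have "(2 * Suc n choose Suc n) * Suc n = 2 * (2 * n + 1) * (2 * n choose n)"
    by (simp add: distrib_left mult.commute)
  then have "real ((2 * Suc n choose Suc n) * Suc n) = real (2 * (2 * n + 1) * (2 * n choose n))"
    by (rule arg_cong)
  then show ?thesis
    by (simp add: field_simps)
qed

lemma sums_of_linear_relation: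
  fixes f g :: "nat \<Rightarrow> 'a :: real_normed_field"
  assumes "(\<lambda>n. a * f n - b * g n) sums c" and "g sums d" and "a \<noteq> 0"
  shows "f sums ((c + b * d) / a)"
proof -
  have "(\<lambda>n. ((a * f n - b * g n) + b * g n) / a) sums ((c + b * d) / a)"
    using assms(1,2) by (intro sums_divide sums_add sums_mult)
  then show ?thesis
    using assms(3) by simp
qed

definition cbinom_ratio :: "real \<Rightarrow> nat \<Rightarrow> real" where
  "cbinom_ratio s n = real (2 * n choose n) / gbinom (2 * real n + 2 * s) (real n + s)"

lemma cbinom_ratio_Gamma:
  "cbinom_ratio s n = real (2 * n choose n) * Gamma (real n + s + 1)^2 / Gamma (2 * real n + 2 * s + 1)"
  unfolding cbinom_ratio_def gbinom_def by (simp add: power2_eq_square algebra_simps)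

lemma cbinom_ratio_Suc:
  assumes "s > 0"
  shows "cbinom_ratio s (Suc n)
         = cbinom_ratio s n * ((2 * real n + 1) * (real n + s + 1) / ((real n + 1) * (2 * real n + 2 * s + 1)))"
proof -
  \<comment> \<open>opaque abbreviations keep \<open>field_simps\<close> from multiplying out the denominators\<close>
  define u v where "u = real n + s + 1" and "v = 2 * real n + 2 * s + 1"
  have pos: "u > 0" "v > 0" "real n + 1 > 0"
    using assms by (simp_all add: u_def v_def)
  have "Gamma v \<noteq> 0"
    using pos by (auto simp: Gamma_eq_zero_iff)
  have G: "Gamma (real (Suc n) + s + 1) = u * Gamma u"
    using pos Gamma_plus1_real[of u] by (simp add: u_def add_ac)
  have H: "Gamma (2 * real (Suc n) + 2 * s + 1) = 2 * u * (v * Gamma v)"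
    using pos Gamma_plus1_real[of "v + 1"] Gamma_plus1_real[of v]
    by (simp add: u_def v_def algebra_simps)
  show ?thesis
    using pos \<open>Gamma v \<noteq> 0\<close>
    unfolding cbinom_ratio_Gamma central_binomial_Suc G H u_def [symmetric] v_def [symmetric]
    by (simp add: divide_simps power2_eq_square)
qed

lemma cbinom_ratio_pochhammer:
  assumes "s > 0"
  shows "cbinom_ratio s n = cbinom_ratio s 0
           * (pochhammer (1/2) n * pochhammer (s + 1) n / (pochhammer 1 n * pochhammer (s + 1/2) n))"
proof (induction n)
  case (Suc n)
  define a b c d where "a = 1/2 + real n" and "b = s + 1 + real n" and "c = 1 + real n"
    and "d = s + 1/2 + real n"
  have factors: "2 * real n + 1 = 2 * a" "real n + s + 1 = b" "real n + 1 = c"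
    "2 * real n + 2 * s + 1 = 2 * d"
    by (simp_all add: a_def b_def c_def d_def)
  have "pochhammer 1 n > (0 :: real)" "pochhammer (s + 1/2) n > 0" "c > 0" "d > 0"
    using assms by (simp_all add: pochhammer_pos c_def d_def)
  then show ?case
    unfolding cbinom_ratio_Suc [OF assms] Suc.IH pochhammer_rec' factors
      a_def [symmetric] b_def [symmetric] c_def [symmetric] d_def [symmetric]
    by (simp add: field_simps)
qed simp

lemma cbinom_ratio_tendsto:
  assumes "s > 0"
  shows "cbinom_ratio s \<longlonglongrightarrow> 1 / 4 powr s"
proof -
  have "(\<lambda>n. cbinom_ratio s 0
           * (pochhammer (1/2) n * pochhammer (s + 1) n / (pochhammer 1 n * pochhammer (s + 1/2) n)))
        \<longlonglongrightarrow> cbinom_ratio s 0 * (Gamma 1 * Gamma (s + 1/2) / (Gamma (1/2) * Gamma (s + 1)))"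
    using assms by (intro tendsto_intros pochhammer_ratio_tendsto) auto
  then have "cbinom_ratio s \<longlonglongrightarrow> cbinom_ratio s 0 * (Gamma 1 * Gamma (s + 1/2) / (Gamma (1/2) * Gamma (s + 1)))"
    by (simp only: cbinom_ratio_pochhammer [OF assms, symmetric])
  moreover have "cbinom_ratio s 0 * (Gamma 1 * Gamma (s + 1/2) / (Gamma (1/2) * Gamma (s + 1))) = 1 / 4 powr s"
  proof -
    have nz: "Gamma (s + 1) \<noteq> 0" "Gamma (2 * s + 1) \<noteq> 0"
      using assms by (auto simp: Gamma_eq_zero_iff)
    have "(4 :: real) powr s = 2 powr (2 * s)"
      using powr_powr[of 2 2 s] by simp
    then have "2 powr (1 - 2 * (s + 1/2)) * 4 powr s = 1"
      by (simp add: powr_add [symmetric])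
    then have "Gamma (s + 1/2) * Gamma (s + 1) * 4 powr s = sqrt pi * Gamma (2 * s + 1)"
      using Gamma_legendre_duplication_real[of "s + 1/2"] assms by (simp add: algebra_simps)
    then have half: "Gamma (s + 1/2) = sqrt pi * Gamma (2 * s + 1) / (Gamma (s + 1) * 4 powr s)"
      using nz by (simp add: eq_divide_eq ac_simps)
    show ?thesis
      using nz unfolding cbinom_ratio_Gamma Gamma_one_half_real half
      by (simp add: divide_simps power2_eq_square)
  qed
  ultimately show ?thesis
    by simp
qed

lemma cbinom_ratio_diff:
  assumes "s > 0"
  shows "cbinom_ratio s n - cbinom_ratio s (Suc n)
           = s * (cbinom_ratio s n / ((real n + 1) * (2 * real n + 2 * s + 1)))"
proof -
  define D where "D = (real n + 1) * (2 * real n + 2 * s + 1)"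
  have "D > 0"
    using assms by (simp add: D_def)
  have N: "(2 * real n + 1) * (real n + s + 1) = D - s"
    by (simp add: D_def algebra_simps)
  show ?thesis
    using \<open>D > 0\<close> unfolding cbinom_ratio_Suc [OF assms] D_def [symmetric] N
    by (simp add: field_simps)
qed

lemma cbinom_ratio_sums:
  assumes "s > 0"
  shows "(\<lambda>n. cbinom_ratio s n / ((real n + 1) * (2 * real n + 2 * s + 1)))
           sums ((cbinom_ratio s 0 - 1 / 4 powr s) / s)"
  using sums_divide [OF telescope_sums' [OF cbinom_ratio_tendsto [OF assms]], of s] assms
  by (simp add: cbinom_ratio_diff)

lemma cbinom_ratio_weighted_diff:
  fixes m r :: real
  assumes "m > 0" "m + r > 0"
  shows "cbinom_ratio (m + r) n * (real n / (real n + m))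
           - cbinom_ratio (m + r) (Suc n) * (real (Suc n) / (real (Suc n) + m))
         = r * (2 * m + 1) * (cbinom_ratio (m + r) n / ((real n + m + 1) * (2 * real n + 2 * (m + r) + 1)))
           - m * (2 * r + 1) * (cbinom_ratio (m + r) n / ((real n + m) * (2 * real n + 2 * (m + r) + 1)))"
    (is "?L = ?R")
proof -
  define c A B w z where "c = cbinom_ratio (m + r) n" and "A = real n + m" and "B = A + 1"
    and "w = real n + 1" and "z = 2 * real n + 2 * (m + r) + 1"
  have pos: "A > 0" "B > 0" "w > 0" "z > 0"
    using assms by (simp_all add: A_def B_def w_def z_def)
  have shorthands: "real (Suc n) = w" "real n + m = A" "w + m = B" "A + 1 = B"
    "2 * real n + 2 * (m + r) + 1 = z" "real n + 1 = w"
    by (simp_all add: A_def B_def w_def z_def)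
  have "?L = c * (real n * B * z - (2 * real n + 1) * (real n + (m + r) + 1) * A) / (A * B * z)"
    using pos unfolding cbinom_ratio_Suc [OF assms(2)] c_def [symmetric] shorthands
    by (simp add: field_simps)
  also have "\<dots> = c * (r * (2 * m + 1) * A - m * (2 * r + 1) * B) / (A * B * z)"
    by (simp add: A_def B_def z_def algebra_simps)
  also have "\<dots> = ?R"
    using pos unfolding c_def [symmetric] shorthands by (simp add: field_simps)
  finally show ?thesis .
qed

lemma cbinom_ratio_weighted_sums:
  fixes m r :: real
  assumes "m > 0" "m + r > 0"
  shows "(\<lambda>n. r * (2 * m + 1) * (cbinom_ratio (m + r) n / ((real n + m + 1) * (2 * real n + 2 * (m + r) + 1)))
            - m * (2 * r + 1) * (cbinom_ratio (m + r) n / ((real n + m) * (2 * real n + 2 * (m + r) + 1))))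
         sums (- (1 / 4 powr (m + r)))"
proof -
  define f where "f n = cbinom_ratio (m + r) n * (real n / (real n + m))" for n
  have "(\<lambda>n. real n / (real n + m)) \<longlonglongrightarrow> 1"
    by real_asymp
  then have "f \<longlonglongrightarrow> 1 / 4 powr (m + r) * 1"
    unfolding f_def using assms by (intro tendsto_intros cbinom_ratio_tendsto)
  then have "(\<lambda>n. f n - f (Suc n)) sums (f 0 - 1 / 4 powr (m + r))"
    by (intro telescope_sums') simp
  moreover have "f 0 = 0"
    by (simp add: f_def)
  ultimately show ?thesis
    unfolding f_def cbinom_ratio_weighted_diff [OF assms] by simp
qed

lemma rfactor_Gamma:
  assumes "r > 0"
  shows "rfactor r = Gamma (2 * r) / Gamma r ^ 2"
proof (cases "r = 1/2")
  case False
  have "2 * r - 1 \<notin> \<int>\<^sub>\<le>\<^sub>0"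
  proof
    assume "2 * r - 1 \<in> \<int>\<^sub>\<le>\<^sub>0"
    then obtain n where n: "2 * r - 1 = - real n"
      by (auto elim!: nonpos_Ints_cases')
    with assms have "n = 0"
      by linarith
    with n False show False
      by simp
  qed
  then have "Gamma (2 * r) = (2 * r - 1) * Gamma (2 * r - 1)"
    using Gamma_plus1 [of "2 * r - 1"] by simp
  moreover have "gbinom (2 * r - 2) (r - 1) = Gamma (2 * r - 1) / (Gamma r * Gamma r)"
    unfolding gbinom_def by (simp add: algebra_simps)
  ultimately show ?thesis
    using False unfolding rfactor_def by (simp add: power2_eq_square)
qed (simp add: rfactor_def)

lemma rfactor_plus1:
  assumes "r > 0"
  shows "rfactor (r + 1) = rfactor r * (2 * (2 * r + 1) / r)"
proof -
  have G: "Gamma (r + 1) = r * Gamma r"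
    using Gamma_plus1_real [OF assms] .
  have G2: "Gamma (2 * (r + 1)) = (2 * r + 1) * (2 * r * Gamma (2 * r))"
    using assms Gamma_plus1_real [of "2 * r + 1"] Gamma_plus1_real [of "2 * r"] by (simp add: algebra_simps)
  have "Gamma r \<noteq> 0" "r + 1 > 0"
    using assms by (auto simp: Gamma_eq_zero_iff)
  then show ?thesis
    using assms unfolding rfactor_Gamma [OF assms] rfactor_Gamma [OF \<open>r + 1 > 0\<close>] G G2
    by (simp add: field_simps power2_eq_square)
qed

definition closed_part :: "nat \<Rightarrow> real \<Rightarrow> real" where
  "closed_part m r = 1 / (2 * (2 * real m + 1) * real (2 * m choose m)) * (1 / rfactor r)"

lemma closed_part_rec:
  assumes "r > 0"
  shows "r * (2 * real (Suc k) + 1) * closed_part (Suc k) r = real (Suc k) * (2 * r + 1) * closed_part k (r + 1)"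
proof -
  define M a b t where "M = real (Suc k)" and "a = 2 * M + 1" and "b = 2 * real k + 1"
    and "t = 2 * r + 1"
  have shorthands: "real (Suc k) = M" "2 * M + 1 = a" "2 * real k + 1 = b" "real k + 1 = M"
    "2 * r + 1 = t"
    by (simp_all add: M_def a_def b_def t_def)
  have "rfactor r > 0"
    unfolding rfactor_Gamma [OF assms] using assms by (intro divide_pos_pos) (auto simp: Gamma_eq_zero_iff)
  moreover have "real (2 * k choose k) > 0" "M > 0" "a > 0" "b > 0" "t > 0"
    using assms by (simp_all add: M_def a_def b_def t_def)
  ultimately show ?thesis
    using assms unfolding closed_part_def central_binomial_Suc rfactor_plus1 [OF assms] shorthands
    by (simp add: field_simps)
qed

lemma cbinom_ratio_0_closed_part:
  assumes "r > 0"
  shows "cbinom_ratio r 0 = r * closed_part 0 r"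
proof -
  have G: "Gamma (real 0 + r + 1) = r * Gamma r"
    using assms Gamma_plus1_real [of r] by simp
  have G2: "Gamma (2 * real 0 + 2 * r + 1) = 2 * r * Gamma (2 * r)"
    using assms Gamma_plus1_real [of "2 * r"] by simp
  have "Gamma r \<noteq> 0" "Gamma (2 * r) \<noteq> 0"
    using assms by (auto simp: Gamma_eq_zero_iff)
  then show ?thesis
    using assms unfolding cbinom_ratio_Gamma closed_part_def rfactor_Gamma [OF assms] G G2
    by (simp add: field_simps power2_eq_square)
qed

definition binom_poch_coeff :: "nat \<Rightarrow> real \<Rightarrow> nat \<Rightarrow> real" where
  "binom_poch_coeff m r j = real (m choose j) * (-1) ^ j * fact j / pochhammer (r + 1) j"

definition finite_part :: "nat \<Rightarrow> real \<Rightarrow> real" where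
  "finite_part m r = (\<Sum>k=0..m. real (m choose k) * ((-1) ^ k / (2 * real k + 1)) * (fact k / pochhammer r (k + 1)))"

lemma finite_part_binom_poch_coeff:
  assumes "r > 0"
  shows "finite_part m r = (\<Sum>j\<le>m. binom_poch_coeff m r j / (2 * real j + 1)) / r"
  unfolding finite_part_def atLeast0AtMost sum_divide_distrib
proof (rule sum.cong [OF refl])
  fix j
  have "pochhammer r (j + 1) = r * pochhammer (r + 1) j"
    by (simp add: pochhammer_rec)
  moreover have "pochhammer (r + 1) j > 0"
    using assms by (simp add: pochhammer_pos)
  ultimately show "real (m choose j) * ((-1) ^ j / (2 * real j + 1)) * (fact j / pochhammer r (j + 1))
      = binom_poch_coeff m r j / (2 * real j + 1) / r"
    using assms by (simp add: binom_poch_coeff_def field_simps)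
qed

lemma binom_poch_coeff_Suc:
  assumes "r > 0"
  shows "binom_poch_coeff m r (Suc j) = - binom_poch_coeff m r j * real (m - j) / (r + 1 + real j)"
proof -
  define b w q P where "b = real (m choose j)" and "w = real (Suc j)" and "q = r + 1 + real j"
    and "P = pochhammer (r + 1) j"
  have "real (Suc j) * real (m choose Suc j) = real (m - j) * b"
    unfolding b_def by (simp only: of_nat_mult [symmetric] binomial_absorption binomial_absorb_comp)
  then have binom: "real (m choose Suc j) = real (m - j) * b / real (Suc j)"
    by (intro eq_divide_imp) (simp, metis mult.commute)
  have "P > 0" "q > 0" "w > 0"
    using assms by (simp_all add: P_def q_def w_def pochhammer_pos)
  then show ?thesis
    unfolding binom_poch_coeff_def pochhammer_rec' fact_Suc binom b_def [symmetric] q_def [symmetric]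
      P_def [symmetric] w_def [symmetric]
    by (simp add: field_simps)
qed

lemma binom_poch_coeff_Suc_Suc:
  assumes "r > 0"
  shows "binom_poch_coeff (Suc k) r (Suc j) = - (real (Suc k) / (r + 1)) * binom_poch_coeff k (r + 1) j"
proof -
  define b w t P where "b = real (k choose j)" and "w = real (Suc j)" and "t = r + 1"
    and "P = pochhammer (r + 1 + 1) j"
  have "real (Suc j) * real (Suc k choose Suc j) = real (Suc k) * b"
    unfolding b_def by (simp only: of_nat_mult [symmetric] Suc_times_binomial)
  then have binom: "real (Suc k choose Suc j) = real (Suc k) * b / real (Suc j)"
    by (intro eq_divide_imp) (simp, metis mult.commute)
  have "P > 0" "w > 0" "t > 0"
    using assms by (simp_all add: P_def w_def t_def pochhammer_pos)
  then show ?thesis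
    unfolding binom_poch_coeff_def pochhammer_rec [of "r + 1"] fact_Suc binom
    unfolding b_def [symmetric] P_def [symmetric] w_def [symmetric]
    unfolding t_def [symmetric]
    by (simp add: field_simps)
qed

lemma finite_part_shift:
  assumes "r > 0"
  shows "real (Suc k) * finite_part k (r + 1)
           = - (\<Sum>j\<le>k. binom_poch_coeff (Suc k) r (Suc j) / (2 * real j + 1))"
proof -
  define S where "S = (\<Sum>j\<le>k. binom_poch_coeff (Suc k) r (Suc j) / (2 * real j + 1))"
  have "binom_poch_coeff k (r + 1) j = - ((r + 1) / real (Suc k)) * binom_poch_coeff (Suc k) r (Suc j)" for j
    using binom_poch_coeff_Suc_Suc [OF assms, of k j] assms by (simp add: field_simps)
  then have "(\<Sum>j\<le>k. binom_poch_coeff k (r + 1) j / (2 * real j + 1)) = - ((r + 1) / real (Suc k)) * S"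
    unfolding S_def sum_distrib_left by simp
  moreover have "r + 1 > 0"
    using assms by simp
  ultimately show ?thesis
    unfolding finite_part_binom_poch_coeff [OF \<open>r + 1 > 0\<close>] S_def [symmetric] by simp
qed

text \<open>The summands of the recurrence for \<^const>\<open>finite_part\<close> telescope against this certificate.\<close>

definition finite_part_certificate :: "nat \<Rightarrow> real \<Rightarrow> nat \<Rightarrow> real" where
  "finite_part_certificate m r j = 2 * binom_poch_coeff m r (Suc j) * (r + real (Suc j)) / (2 * real j + 1)"

lemma finite_part_certificate_diff:
  assumes "r > 0" "j \<le> k"
  shows "(2 * real (Suc k) + 1) * (binom_poch_coeff (Suc k) r (Suc j) / (2 * real (Suc j) + 1))
           + (2 * r + 1) * (binom_poch_coeff (Suc k) r (Suc j) / (2 * real j + 1))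
         = finite_part_certificate (Suc k) r j - finite_part_certificate (Suc k) r (Suc j)"
proof -
  define D a b c where "D = binom_poch_coeff (Suc k) r (Suc j)" and "a = 2 * real (Suc j) + 1"
    and "b = 2 * real j + 1" and "c = r + 1 + real (Suc j)"
  have pos: "a > 0" "b > 0" "c > 0"
    using assms by (simp_all add: a_def b_def c_def)
  have "binom_poch_coeff (Suc k) r (Suc (Suc j)) = - D * (real k - real j) / c"
    using binom_poch_coeff_Suc [OF assms(1), of "Suc k" "Suc j"] assms(2)
    by (simp add: D_def c_def of_nat_diff)
  then have cert: "finite_part_certificate (Suc k) r j = 2 * D * (r + real (Suc j)) / b"
    "finite_part_certificate (Suc k) r (Suc j) = - 2 * D * (real k - real j) / a"
    using pos by (simp_all add: finite_part_certificate_def D_def a_def b_def c_def field_simps)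
  have coeffs: "2 * real (Suc k) + 1 = 2 * (real k - real j) + a" "2 * r + 1 = 2 * (r + real (Suc j)) - b"
    by (simp_all add: a_def b_def)
  show ?thesis
    using pos unfolding cert D_def [symmetric] a_def [symmetric] b_def [symmetric] coeffs
    by (simp add: field_simps)
qed

lemma finite_part_rec:
  assumes "r > 0"
  shows "r * (2 * real (Suc k) + 1) * finite_part (Suc k) r
           - real (Suc k) * (2 * r + 1) * finite_part k (r + 1) = 1"
proof -
  define m where "m = Suc k"
  define d g where "d = binom_poch_coeff m r" and "g = finite_part_certificate m r"
  have "d 0 = 1"
    by (simp add: d_def binom_poch_coeff_def)
  have "g 0 = - 2 * real m"
  proof -
    have "d 1 = - real m / (r + 1)"
      using binom_poch_coeff_Suc [OF assms, of m 0] by (simp add: d_def binom_poch_coeff_def)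
    then show ?thesis
      using assms by (simp add: g_def finite_part_certificate_def d_def)
  qed
  have "g (Suc k) = 0"
  proof -
    have "m choose Suc (Suc k) = 0"
      by (rule binomial_eq_0) (simp add: m_def)
    then show ?thesis
      by (simp add: g_def finite_part_certificate_def binom_poch_coeff_def)
  qed
  have "r * (2 * real m + 1) * finite_part m r
      = (2 * real m + 1) * (d 0 + (\<Sum>j\<le>k. d (Suc j) / (2 * real (Suc j) + 1)))"
    using assms unfolding finite_part_binom_poch_coeff [OF assms] m_def d_def sum.atMost_Suc_shift by simp
  moreover have "real m * (2 * r + 1) * finite_part k (r + 1)
      = - ((2 * r + 1) * (\<Sum>j\<le>k. d (Suc j) / (2 * real j + 1)))"
  proof -
    have "real m * (2 * r + 1) * finite_part k (r + 1) = (2 * r + 1) * (real m * finite_part k (r + 1))"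
      by (simp only: ac_simps)
    then show ?thesis
      unfolding m_def d_def finite_part_shift [OF assms] by simp
  qed
  ultimately have "r * (2 * real m + 1) * finite_part m r - real m * (2 * r + 1) * finite_part k (r + 1)
      = (2 * real m + 1) * d 0 + (\<Sum>j\<le>k. (2 * real m + 1) * (d (Suc j) / (2 * real (Suc j) + 1))
                                          + (2 * r + 1) * (d (Suc j) / (2 * real j + 1)))"
    by (simp add: sum.distrib sum_distrib_left algebra_simps)
  also have "\<dots> = 2 * real m + 1 + (\<Sum>j\<le>k. g j - g (Suc j))"
    using \<open>d 0 = 1\<close> finite_part_certificate_diff [OF assms] by (simp add: m_def d_def g_def)
  also have "\<dots> = 1"
    by (simp only: sum_telescope \<open>g 0 = - 2 * real m\<close> \<open>g (Suc k) = 0\<close>)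
  finally show ?thesis
    by (simp only: m_def)
qed

definition series_term :: "nat \<Rightarrow> real \<Rightarrow> nat \<Rightarrow> real" where
  "series_term m r n =
     cbinom_ratio (real m + r) n / ((real n + real m + 1) * (2 * real n + 2 * (real m + r) + 1))"

lemma series_term_rec:
  assumes "r > 0"
  shows "(\<lambda>n. r * (2 * real (Suc k) + 1) * series_term (Suc k) r n
              - real (Suc k) * (2 * r + 1) * series_term k (r + 1) n)
           sums (- (1 / 4 powr (real (Suc k) + r)))"
proof -
  have "series_term k (r + 1) n = cbinom_ratio (real (Suc k) + r) n
          / ((real n + real (Suc k)) * (2 * real n + 2 * (real (Suc k) + r) + 1))" for n
    by (simp add: series_term_def algebra_simps)
  then show ?thesis
    using cbinom_ratio_weighted_sums [of "real (Suc k)" r] assms by (simp add: series_term_def add_ac)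
qed

lemma series_term_sums:
  assumes "r > 0"
  shows "series_term m r sums (closed_part m r - 1 / 4 powr (real m + r) * finite_part m r)"
  using assms
proof (induction m arbitrary: r)
  case 0
  have "(cbinom_ratio r 0 - 1 / 4 powr r) / r = closed_part 0 r - 1 / 4 powr r * finite_part 0 r"
    using 0 by (simp add: cbinom_ratio_0_closed_part finite_part_def field_simps)
  then show ?case
    using cbinom_ratio_sums [OF 0] by (simp add: series_term_def [abs_def])
next
  case (Suc k)
  define q a b where "q = 1 / 4 powr (real (Suc k) + r)" and "a = r * (2 * real (Suc k) + 1)"
    and "b = real (Suc k) * (2 * r + 1)"
  have "a \<noteq> 0"
    using Suc.prems by (simp add: a_def)
  have shift: "real k + (r + 1) = real (Suc k) + r"
    by simp
  have IH: "series_term k (r + 1) sums (closed_part k (r + 1) - q * finite_part k (r + 1))"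
    using Suc.IH [of "r + 1"] Suc.prems unfolding shift q_def by simp
  have sums: "series_term (Suc k) r sums ((- q + b * (closed_part k (r + 1) - q * finite_part k (r + 1))) / a)"
    using series_term_rec [OF Suc.prems, of k] IH \<open>a \<noteq> 0\<close> unfolding q_def a_def b_def
    by (rule sums_of_linear_relation)
  have closed: "closed_part (Suc k) r = b * closed_part k (r + 1) / a"
    using closed_part_rec [OF Suc.prems, of k] \<open>a \<noteq> 0\<close> unfolding a_def b_def
    by (simp add: field_simps)
  have finite: "finite_part (Suc k) r = (1 + b * finite_part k (r + 1)) / a"
    using finite_part_rec [OF Suc.prems, of k] \<open>a \<noteq> 0\<close> unfolding a_def b_def
    by (simp add: field_simps)
  have "(- q + b * (closed_part k (r + 1) - q * finite_part k (r + 1))) / a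
      = closed_part (Suc k) r - q * finite_part (Suc k) r"
    using \<open>a \<noteq> 0\<close> unfolding closed finite by (simp add: field_simps)
  with sums show ?case
    unfolding q_def by simp
qed

theorem theorem5p0p1:
  fixes m :: nat and r :: real
  assumes "r > 0"
  shows "(\<lambda>n. 1 / ((real n + real m + 1) * (2 * real n + 2 * real m + 2 * r + 1))
              * (real (2 * n choose n)
                 / gbinom (2 * real n + 2 * real m + 2 * r) (real n + real m + r)))
         sums (1 / (2 * (2 * real m + 1) * real (2 * m choose m)) * (1 / rfactor r)
               - 1 / 4 powr (real m + r) *
                 (\<Sum>k=0..m. real (m choose k) * ((-1) ^ k / (2 * real k + 1))
                             * (fact k / pochhammer r (k + 1))))"
proof -
  have "(\<lambda>n. 1 / ((real n + real m + 1) * (2 * real n + 2 * real m + 2 * r + 1))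
              * (real (2 * n choose n)
                 / gbinom (2 * real n + 2 * real m + 2 * r) (real n + real m + r))) = series_term m r"
    by (simp add: fun_eq_iff series_term_def cbinom_ratio_def algebra_simps)
  then show ?thesis
    using series_term_sums [OF assms] unfolding closed_part_def finite_part_def by (simp only:)
qed

end
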